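(* Let $f:\mathbb{R}^n\to\mathbb{R}^n$ be continuous, let $\Gamma\in\mathbb{R}^{n\times n}$, and let $L=(l_{ij})\in\mathbb{R}^{m\times m}$ be a coupling matrix (i.e. $l_{ij}\ge 0$ for $i\ne j$ and $\sum_{j=1}^m l_{ij}=0$ for every $i$) which is irreducible with $\mathrm{Rank}(L)=m-1$. Consider the coupled system $$\frac{dx_i(t)}{dt}=f(x_i(t))+c\sum_{j=1}^m l_{ij}\Gamma x_j(t),\qquad i=1,\dots,m,$$ with $x_i(t)\in\mathbb{R}^n$ and coupling strength $c>0$. Suppose there exist a positive definite matrix $P\in\mathbb{R}^{n\times n}$, a matrix $\Delta\in\mathbb{R}^{n\times n}$ and $\epsilon>0$ such that $f$ satisfies the QUAD condition $$(x-y)^T P\big\{[f(x)-f(y)]-\Delta(x-y)\big\}\le -\epsilon (x-y)^T(x-y)\quad\text{for all }x,y\in\mathbb{R}^n,$$ that $\mathrm{Ran}(P\Delta)=\mathrm{Ran}(P\Gamma)$ (in particular this holds if $\Delta=\Gamma$), and that $P\Gamma=BB^T$ for some matrix $B$ and $P\Gamma$ is positive definite on the range $\mathrm{Ran}(P\Gamma)$. Then the system reaches synchronization if the coupling strength $c$ is large enough.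
   Context: $\mathrm{Ran}(M)$ denotes the range (column space) of a matrix $M$. "Positive definite on $\mathrm{Ran}(P\Gamma)$" means $u^T P\Gamma u>0$ for every nonzero $u\in\mathrm{Ran}(P\Gamma)$. The system reaches synchronization if $\lim_{t\to\infty}\|x_i(t)-x_j(t)\|=0$ for all $i,j$ and all initial conditions. *)

theory Defs
  imports "HOL-Analysis.Analysis"
begin

definition coupling_matrix :: "real^'m^'m \<Rightarrow> bool" where
  "coupling_matrix L \<longleftrightarrow>
     (\<forall>i j. i \<noteq> j \<longrightarrow> L $ i $ j \<ge> 0) \<and> (\<forall>i. (\<Sum>j\<in>UNIV. L $ i $ j) = 0)"

definition irreducible_mat :: "real^'m^'m \<Rightarrow> bool" where
  "irreducible_mat L \<longleftrightarrow>
     (\<forall>I. I \<noteq> {} \<and> I \<noteq> UNIV \<longrightarrow> (\<exists>i\<in>I. \<exists>j. j \<notin> I \<and> L $ i $ j \<noteq> 0))"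

definition pos_def_mat :: "real^'n^'n \<Rightarrow> bool" where
  "pos_def_mat P \<longleftrightarrow> transpose P = P \<and> (\<forall>x. x \<noteq> 0 \<longrightarrow> x \<bullet> (P *v x) > 0)"

definition Ran :: "real^'n^'m \<Rightarrow> (real^'m) set" where
  "Ran M = range (\<lambda>x. M *v x)"

definition pos_def_on :: "real^'n^'n \<Rightarrow> (real^'n) set \<Rightarrow> bool" where
  "pos_def_on M S \<longleftrightarrow> (\<forall>u\<in>S. u \<noteq> 0 \<longrightarrow> u \<bullet> (M *v u) > 0)"

definition QUAD :: "(real^'n \<Rightarrow> real^'n) \<Rightarrow> real^'n^'n \<Rightarrow> real^'n^'n \<Rightarrow> real \<Rightarrow> bool" where
  "QUAD f P \<Delta> \<epsilon> \<longleftrightarrow> (\<forall>x y. (x - y) \<bullet> (P *v ((f x - f y) - \<Delta> *v (x - y)))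
                          \<le> - \<epsilon> * ((x - y) \<bullet> (x - y)))"

definition coupled_solution ::
  "(real^'n \<Rightarrow> real^'n) \<Rightarrow> real^'n^'n \<Rightarrow> real^'m^'m \<Rightarrow> real \<Rightarrow> (real \<Rightarrow> 'm \<Rightarrow> real^'n) \<Rightarrow> bool" where
  "coupled_solution f \<Gamma> L c x \<longleftrightarrow>
     (\<forall>i. \<forall>t\<ge>0. ((\<lambda>s. x s i) has_vector_derivative
         (f (x t i) + c *\<^sub>R (\<Sum>j\<in>UNIV. L $ i $ j *\<^sub>R (\<Gamma> *v x t j)))) (at t within {0..}))"

definition synchronizes :: "(real \<Rightarrow> 'm \<Rightarrow> real^'n) \<Rightarrow> bool" where
  "synchronizes x \<longleftrightarrow> (\<forall>i j. ((\<lambda>t. norm (x t i - x t j)) \<longlongrightarrow> 0) at_top)"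

end

theory Submission
  imports Defs
begin

(* The left null vector \<xi> of the irreducible coupling matrix L can be chosen with positive
   entries summing to 1. Let e i = x i - (\<Sum>k. \<xi> k x k) be the deviation of node i from the
   \<xi>-weighted mean. Along solutions, V = \<Sum>i. \<xi> i (e i)\<^sup>T P (e i) satisfies
   V' \<le> 2 (A e - \<epsilon> N e - c G e), where A e = \<Sum>i. \<xi> i (e i)\<^sup>T P\<Delta> (e i) comes from QUAD,
   N e = \<Sum>i. \<xi> i |e i|\<^sup>2, and the coupling energy G e = 1/2 \<Sum>i j. \<xi> i l i j |B\<^sup>T (e i - e j)|\<^sup>2
   is nonnegative. On the subspace \<Sum>i. \<xi> i e i = 0, G vanishes only if all B\<^sup>T e i vanish, and
   then A e = 0 because Ran (P\<Delta>) \<subseteq> Ran (B B\<^sup>T). All three forms being quadratic, compactness of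
   the unit sphere yields A - \<epsilon> N / 2 \<le> c G once c is large. Then V' \<le> -\<epsilon> N \<le> -(\<epsilon> / K) V
   for any K with V \<le> K N, so V decays exponentially. *)

lemma homogeneous_le_if_le_on_sphere:
  fixes F G :: "'a::real_normed_vector \<Rightarrow> real"
  assumes S: "subspace S"
    and homF: "\<And>r e. F (r *\<^sub>R e) = r\<^sup>2 * F e" and homG: "\<And>r e. G (r *\<^sub>R e) = r\<^sup>2 * G e"
    and sphere: "\<And>u. u \<in> S \<Longrightarrow> norm u = 1 \<Longrightarrow> F u \<le> c * G u"
    and "e \<in> S"
  shows "F e \<le> c * G e"
proof (cases "e = 0")
  case True
  then show ?thesis using homF[of 0] homG[of 0] by simp
next
  case False
  define u where "u = (1 / norm e) *\<^sub>R e"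
  have "u \<in> S" "norm u = 1"
    using \<open>e \<in> S\<close> False S by (auto simp: u_def subspace_scale)
  have "e = norm e *\<^sub>R u" using False by (simp add: u_def)
  then have "F e = (norm e)\<^sup>2 * F u" "G e = (norm e)\<^sup>2 * G u"
    by (metis homF, metis homG)
  then show ?thesis
    using sphere[OF \<open>u \<in> S\<close> \<open>norm u = 1\<close>] by (simp add: mult.left_commute[of c] mult_left_mono)
qed

lemma dominated_by_multiple_on_subspace:
  fixes F G :: "'a::euclidean_space \<Rightarrow> real"
  assumes S: "subspace S" and contF: "continuous_on S F" and contG: "continuous_on S G"
    and homF: "\<And>r e. F (r *\<^sub>R e) = r\<^sup>2 * F e" and homG: "\<And>r e. G (r *\<^sub>R e) = r\<^sup>2 * G e"
    and G_nonneg: "\<And>e. e \<in> S \<Longrightarrow> G e \<ge> 0"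
    and F_neg: "\<And>e. e \<in> S \<Longrightarrow> e \<noteq> 0 \<Longrightarrow> G e = 0 \<Longrightarrow> F e < 0"
  shows "\<exists>c0\<ge>0. \<forall>c\<ge>c0. \<forall>e\<in>S. F e \<le> c * G e"
proof -
  define T where "T = (S \<inter> F -` {0..}) \<inter> sphere 0 1"
  have "compact T"
    unfolding T_def
    by (intro closed_Int_compact continuous_closed_preimage contF closed_subspace[OF S]
        closed_atLeast compact_sphere)
  moreover have G_pos: "G u > 0" if "u \<in> T" for u
    using that G_nonneg F_neg[of u] by (fastforce simp: T_def less_le)
  moreover have "T \<subseteq> S" by (auto simp: T_def)
  ultimately have "compact ((\<lambda>u. F u / G u) ` T)"
    by (intro compact_continuous_image continuous_on_divide continuous_on_subset[OF contF]
        continuous_on_subset[OF contG]) (auto dest: less_imp_neq[symmetric])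
  then obtain M where M: "\<And>u. u \<in> T \<Longrightarrow> F u / G u \<le> M"
    by (meson bdd_above.E bounded_imp_bdd_above compact_imp_bounded imageI)
  have "F u \<le> c * G u" if "c \<ge> max 0 M" "u \<in> S" "norm u = 1" for c u
  proof (cases "F u \<ge> 0")
    case True
    then have "u \<in> T" using that by (simp add: T_def)
    then have "F u \<le> M * G u" using M[of u] G_pos[of u] by (simp add: divide_le_eq)
    also have "\<dots> \<le> c * G u" using that G_pos[OF \<open>u \<in> T\<close>] by (intro mult_right_mono) auto
    finally show ?thesis .
  next
    case False
    then show ?thesis using that G_nonneg[of u] by (smt (verit) mult_nonneg_nonneg)
  qed
  then show ?thesis
    using homogeneous_le_if_le_on_sphere[OF S homF homG] by (intro exI[of _ "max 0 M"]) auto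
qed

corollary dominated_by_positive_homogeneous:
  fixes F G :: "'a::euclidean_space \<Rightarrow> real"
  assumes "continuous_on UNIV F" "continuous_on UNIV G"
    and "\<And>r e. F (r *\<^sub>R e) = r\<^sup>2 * F e" "\<And>r e. G (r *\<^sub>R e) = r\<^sup>2 * G e"
    and G_pos: "\<And>e. e \<noteq> 0 \<Longrightarrow> G e > 0"
  shows "\<exists>c>0. \<forall>e. F e \<le> c * G e"
proof -
  have "G 0 = 0" using assms(4)[of 0] by simp
  then have "G e \<ge> 0" for e using G_pos[of e] by (cases "e = 0") auto
  then obtain c0 where "c0 \<ge> 0" "\<forall>c\<ge>c0. \<forall>e. F e \<le> c * G e"
    using dominated_by_multiple_on_subspace[OF subspace_UNIV assms(1-4)] G_pos
    by (metis UNIV_I less_irrefl)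
  then show ?thesis by (intro exI[of _ "c0 + 1"]) auto
qed

lemma coupling_matrix_left_kernel:
  fixes L :: "real^'m^'m"
  assumes "coupling_matrix L"
  shows "\<exists>\<xi>. \<xi> \<noteq> 0 \<and> \<xi> v* L = 0"
proof -
  have "L *v 1 = 0"
    using assms by (simp add: coupling_matrix_def matrix_vector_mult_def vec_eq_iff)
  then have "rank L \<noteq> CARD('m)"
    using matrix_nonfull_linear_equations_eq[of L] by (metis one_neq_zero)
  then show ?thesis
    using matrix_nonfull_linear_equations_eq[of "transpose L"] by (simp add: rank_transpose)
qed

lemma coupling_matrix_left_kernel_abs:
  fixes L :: "real^'m^'m"
  assumes L: "coupling_matrix L" and \<xi>: "\<xi> v* L = 0"
  shows "(\<chi> i. \<bar>\<xi>$i\<bar>) v* L = 0"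
proof -
  have off: "i \<noteq> j \<Longrightarrow> L$i$j \<ge> 0" for i j using L by (simp add: coupling_matrix_def)
  have diag: "L$j$j \<le> 0" for j
  proof -
    have "0 = L$j$j + (\<Sum>k\<in>UNIV-{j}. L$j$k)"
      using L by (simp add: coupling_matrix_def sum.remove[of UNIV j])
    moreover have "(\<Sum>k\<in>UNIV-{j}. L$j$k) \<ge> 0" by (intro sum_nonneg) (simp add: off)
    ultimately show ?thesis by linarith
  qed
  \<comment> \<open>Each column sum is nonnegative by the triangle inequality, and they add up to 0.\<close>
  have col_nonneg: "(\<Sum>i\<in>UNIV. \<bar>\<xi>$i\<bar> * L$i$j) \<ge> 0" for j
  proof -
    have "0 = \<xi>$j * L$j$j + (\<Sum>i\<in>UNIV-{j}. \<xi>$i * L$i$j)"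
      using \<xi> by (simp add: vector_matrix_mult_def vec_eq_iff sum.remove[of UNIV j])
    then have "- (\<bar>\<xi>$j\<bar> * L$j$j) = \<bar>\<Sum>i\<in>UNIV-{j}. \<xi>$i * L$i$j\<bar>"
      using diag[of j] by (simp add: abs_mult abs_minus_commute add_eq_0_iff)
    also have "\<dots> \<le> (\<Sum>i\<in>UNIV-{j}. \<bar>\<xi>$i * L$i$j\<bar>)" by (rule sum_abs)
    also have "\<dots> = (\<Sum>i\<in>UNIV-{j}. \<bar>\<xi>$i\<bar> * L$i$j)"
      by (rule sum.cong) (auto simp: abs_mult off)
    finally show ?thesis by (simp add: sum.remove[of UNIV j])
  qed
  have "(\<Sum>j\<in>UNIV. \<Sum>i\<in>UNIV. \<bar>\<xi>$i\<bar> * L$i$j)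
      = (\<Sum>i\<in>UNIV. \<bar>\<xi>$i\<bar> * (\<Sum>j\<in>UNIV. L$i$j))"
    by (subst sum.swap) (simp add: sum_distrib_left)
  also have "\<dots> = 0" using L by (simp add: coupling_matrix_def)
  finally show ?thesis
    using col_nonneg by (simp add: sum_nonneg_eq_0_iff vector_matrix_mult_def vec_eq_iff)
qed

lemma irreducible_left_kernel_pos:
  fixes L :: "real^'m^'m"
  assumes L: "coupling_matrix L" and irr: "irreducible_mat L"
    and \<eta>: "\<eta> v* L = 0" "\<eta> \<noteq> 0" "\<And>i. \<eta>$i \<ge> 0"
  shows "\<eta>$i > 0"
proof (rule ccontr)
  assume "\<not> \<eta>$i > 0"
  define I where "I = {i. \<eta>$i > 0}"
  have "I \<noteq> UNIV" using \<open>\<not> \<eta>$i > 0\<close> by (auto simp: I_def)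
  moreover have "I \<noteq> {}" using \<eta>(2,3) by (auto simp: I_def vec_eq_iff less_le)
  ultimately obtain k j where kj: "k \<in> I" "j \<notin> I" "L$k$j \<noteq> 0"
    using irr unfolding irreducible_mat_def by blast
  have "\<eta>$j = 0" using kj(2) \<eta>(3)[of j] by (simp add: I_def)
  then have "(\<Sum>i\<in>UNIV-{j}. \<eta>$i * L$i$j) = 0"
    using \<eta>(1) by (simp add: vector_matrix_mult_def vec_eq_iff sum.remove[of UNIV j])
  moreover have "\<eta>$l * L$l$j \<ge> 0" if "l \<noteq> j" for l
    using L \<eta>(3)[of l] that by (simp add: coupling_matrix_def)
  ultimately have "\<eta>$k * L$k$j = 0"
    using kj by (subst (asm) sum_nonneg_eq_0_iff) auto
  then show False using kj by (simp add: I_def)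
qed

lemma coupling_matrix_perron_vector:
  fixes L :: "real^'m^'m"
  assumes L: "coupling_matrix L" and irr: "irreducible_mat L"
  shows "\<exists>\<xi>. (\<forall>i. \<xi>$i > 0) \<and> (\<Sum>i\<in>UNIV. \<xi>$i) = 1 \<and> \<xi> v* L = 0"
proof -
  obtain \<zeta> where "\<zeta> \<noteq> 0" "\<zeta> v* L = 0" using coupling_matrix_left_kernel[OF L] by blast
  define \<eta> where "\<eta> = (\<chi> i. \<bar>\<zeta>$i\<bar>)"
  have "\<eta> v* L = 0" "\<eta> \<noteq> 0"
    using coupling_matrix_left_kernel_abs[OF L \<open>\<zeta> v* L = 0\<close>] \<open>\<zeta> \<noteq> 0\<close>
    by (auto simp: \<eta>_def vec_eq_iff)
  then have pos: "\<eta>$i > 0" for i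
    by (rule irreducible_left_kernel_pos[OF L irr]) (simp add: \<eta>_def)
  define s where "s = (\<Sum>i\<in>UNIV. \<eta>$i)"
  have "s > 0" unfolding s_def using pos by (simp add: sum_pos)
  show ?thesis
  proof (intro exI[of _ "(1 / s) *\<^sub>R \<eta>"] conjI allI)
    show "((1 / s) *\<^sub>R \<eta>)$i > 0" for i using pos \<open>s > 0\<close> by simp
    show "(\<Sum>i\<in>UNIV. ((1 / s) *\<^sub>R \<eta>)$i) = 1"
      using \<open>s > 0\<close> by (simp add: s_def sum_divide_distrib[symmetric])
    show "((1 / s) *\<^sub>R \<eta>) v* L = 0"
      using \<open>\<eta> v* L = 0\<close> by (simp add: scaleR_vector_matrix_assoc)
  qed
qed

lemma coupling_matrix_weighted_sum_of_squares:
  fixes L :: "real^'m^'m" and z :: "'m \<Rightarrow> 'a::real_inner"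
  assumes L: "coupling_matrix L" and \<xi>: "\<xi> v* L = 0"
  shows "(\<Sum>i\<in>UNIV. \<Sum>j\<in>UNIV. \<xi>$i * L$i$j * (z i \<bullet> z j))
       = - (1/2) * (\<Sum>i\<in>UNIV. \<Sum>j\<in>UNIV. \<xi>$i * L$i$j * (norm (z i - z j))\<^sup>2)"
proof -
  have rows: "(\<Sum>i\<in>UNIV. \<Sum>j\<in>UNIV. \<xi>$i * L$i$j * (z i \<bullet> z i)) = 0"
    using L by (simp add: coupling_matrix_def flip: sum_distrib_left sum_distrib_right)
  have cols: "(\<Sum>i\<in>UNIV. \<Sum>j\<in>UNIV. \<xi>$i * L$i$j * (z j \<bullet> z j)) = 0"
    using \<xi> by (subst sum.swap) (simp add: vector_matrix_mult_def vec_eq_iff flip: sum_distrib_right)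
  have sq: "(norm (z i - z j))\<^sup>2 = z i \<bullet> z i + z j \<bullet> z j - 2 * (z i \<bullet> z j)" for i j
    by (simp add: power2_norm_eq_inner inner_diff inner_commute)
  have "(\<Sum>i\<in>UNIV. \<Sum>j\<in>UNIV. \<xi>$i * L$i$j * (norm (z i - z j))\<^sup>2)
     = (\<Sum>i\<in>UNIV. \<Sum>j\<in>UNIV. \<xi>$i * L$i$j * (z i \<bullet> z i))
       + (\<Sum>i\<in>UNIV. \<Sum>j\<in>UNIV. \<xi>$i * L$i$j * (z j \<bullet> z j))
       - 2 * (\<Sum>i\<in>UNIV. \<Sum>j\<in>UNIV. \<xi>$i * L$i$j * (z i \<bullet> z j))"
    by (simp add: sq algebra_simps sum.distrib sum_subtractf sum_distrib_left)
  then show ?thesis using rows cols by simp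
qed

lemma coupling_matrix_weighted_square_nonneg:
  fixes L :: "real^'m^'m" and z :: "'m \<Rightarrow> 'a::real_normed_vector"
  assumes "coupling_matrix L" and "\<xi>$i \<ge> 0"
  shows "\<xi>$i * L$i$j * (norm (z i - z j))\<^sup>2 \<ge> 0"
  using assms by (cases "i = j") (auto simp: coupling_matrix_def)

lemma irreducible_weighted_sum_of_squares_eq_0:
  fixes L :: "real^'m^'m" and z :: "'m \<Rightarrow> 'a::real_normed_vector"
  assumes L: "coupling_matrix L" and irr: "irreducible_mat L" and \<xi>: "\<And>i. \<xi>$i > 0"
    and sos: "(\<Sum>i\<in>UNIV. \<Sum>j\<in>UNIV. \<xi>$i * L$i$j * (norm (z i - z j))\<^sup>2) = 0"
  shows "z i = z k"
proof -
  have term_nonneg: "\<xi>$i * L$i$j * (norm (z i - z j))\<^sup>2 \<ge> 0" for i j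
    using coupling_matrix_weighted_square_nonneg[OF L less_imp_le[OF \<xi>]] .
  have term_0: "\<xi>$i * L$i$j * (norm (z i - z j))\<^sup>2 = 0" for i j
    using sos term_nonneg by (auto simp: sum_nonneg sum_nonneg_eq_0_iff)
  define I where "I = {i. z i = z k}"
  have "I = UNIV"
  proof (rule ccontr)
    assume "I \<noteq> UNIV"
    moreover have "I \<noteq> {}" by (auto simp: I_def)
    ultimately obtain a b where "a \<in> I" "b \<notin> I" "L$a$b \<noteq> 0"
      using irr unfolding irreducible_mat_def by blast
    then show False using term_0[of a b] \<xi>[of a] by (simp add: I_def)
  qed
  then show ?thesis by (auto simp: I_def)
qed

lemma inner_matrix_mult_transpose:
  fixes B :: "real^'n^'k"
  shows "u \<bullet> ((B ** transpose B) *v v) = (u v* B) \<bullet> (v v* B)"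
  by (simp add: dot_lmul_matrix flip: matrix_vector_mul_assoc)

definition weighted_mean :: "real^'m \<Rightarrow> 'a^'m \<Rightarrow> 'a::real_vector" where
  "weighted_mean \<xi> e = (\<Sum>i\<in>UNIV. \<xi>$i *\<^sub>R e$i)"

definition deviation :: "real^'m \<Rightarrow> 'a^'m \<Rightarrow> 'a::real_vector^'m" where
  "deviation \<xi> z = (\<chi> i. z$i - weighted_mean \<xi> z)"

definition weighted_quad_form :: "real^'m \<Rightarrow> real^'n^'n \<Rightarrow> real^'n^'m \<Rightarrow> real" where
  "weighted_quad_form \<xi> D e = (\<Sum>i\<in>UNIV. \<xi>$i * (e$i \<bullet> (D *v e$i)))"

definition weighted_sq_norm :: "real^'m \<Rightarrow> real^'n^'m \<Rightarrow> real" where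
  "weighted_sq_norm \<xi> e = (\<Sum>i\<in>UNIV. \<xi>$i * (e$i \<bullet> e$i))"

definition coupling_energy :: "real^'m \<Rightarrow> real^'m^'m \<Rightarrow> real^'n^'n \<Rightarrow> real^'n^'m \<Rightarrow> real" where
  "coupling_energy \<xi> L S e = - (\<Sum>i\<in>UNIV. \<Sum>j\<in>UNIV. \<xi>$i * L$i$j * (e$i \<bullet> (S *v e$j)))"

lemma linear_weighted_mean: "linear (weighted_mean \<xi>)"
  by (rule linearI)
    (simp_all add: weighted_mean_def scaleR_add_right sum.distrib scaleR_sum_right mult.commute)

lemma weighted_mean_deviation:
  assumes "(\<Sum>i\<in>UNIV. \<xi>$i) = 1"
  shows "weighted_mean \<xi> (deviation \<xi> z) = 0"
  using assms
  by (simp add: weighted_mean_def deviation_def scaleR_diff_right sum_subtractf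
      flip: scaleR_sum_left)

lemma weighted_mean_eq_0_inner:
  assumes "weighted_mean \<xi> e = 0"
  shows "(\<Sum>i\<in>UNIV. \<xi>$i * (e$i \<bullet> y)) = 0"
proof -
  have "(\<Sum>i\<in>UNIV. \<xi>$i * (e$i \<bullet> y)) = weighted_mean \<xi> e \<bullet> y"
    by (simp add: weighted_mean_def inner_sum_left)
  then show ?thesis using assms by simp
qed

lemma weighted_quad_form_scaleR:
  "weighted_quad_form \<xi> D (r *\<^sub>R e) = r\<^sup>2 * weighted_quad_form \<xi> D e"
  by (simp add: weighted_quad_form_def matrix_vector_mult_scaleR sum_distrib_left power2_eq_square
      mult_ac)

lemma weighted_sq_norm_scaleR: "weighted_sq_norm \<xi> (r *\<^sub>R e) = r\<^sup>2 * weighted_sq_norm \<xi> e"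
  by (simp add: weighted_sq_norm_def sum_distrib_left power2_eq_square mult_ac)

lemma coupling_energy_scaleR:
  "coupling_energy \<xi> L S (r *\<^sub>R e) = r\<^sup>2 * coupling_energy \<xi> L S e"
  by (simp add: coupling_energy_def matrix_vector_mult_scaleR sum_distrib_left power2_eq_square
      mult_ac)

lemma continuous_on_weighted_quad_form: "continuous_on X (weighted_quad_form \<xi> D)"
  unfolding weighted_quad_form_def
  by (intro continuous_intros bounded_linear.continuous_on[OF matrix_vector_mul_bounded_linear])

lemma continuous_on_weighted_sq_norm: "continuous_on X (weighted_sq_norm \<xi>)"
  unfolding weighted_sq_norm_def by (intro continuous_intros)

lemma continuous_on_coupling_energy: "continuous_on X (coupling_energy \<xi> L S)"
  unfolding coupling_energy_def
  by (intro continuous_intros bounded_linear.continuous_on[OF matrix_vector_mul_bounded_linear])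

lemma weighted_sq_norm_pos:
  assumes "\<And>i. \<xi>$i > 0" and "e \<noteq> 0"
  shows "weighted_sq_norm \<xi> e > 0"
proof -
  obtain k where "e$k \<noteq> 0" using assms(2) by (auto simp: vec_eq_iff)
  then show ?thesis
    unfolding weighted_sq_norm_def
    using assms(1) less_imp_le[OF assms(1)] by (intro sum_pos2[of UNIV k]) auto
qed

lemma weighted_quad_form_pos:
  assumes "pos_def_mat P" and "\<And>i. \<xi>$i > 0" and "e \<noteq> 0"
  shows "weighted_quad_form \<xi> P e > 0"
proof -
  obtain k where "e$k \<noteq> 0" using assms(3) by (auto simp: vec_eq_iff)
  moreover have "e$i \<bullet> (P *v e$i) \<ge> 0" for i
    using assms(1) by (cases "e$i = 0") (auto simp: pos_def_mat_def less_imp_le)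
  ultimately show ?thesis
    unfolding weighted_quad_form_def using assms(1,2) less_imp_le[OF assms(2)]
    by (intro sum_pos2[of UNIV k]) (auto simp: pos_def_mat_def)
qed

lemma weighted_sq_norm_nonneg:
  assumes "\<And>i. \<xi>$i \<ge> 0"
  shows "weighted_sq_norm \<xi> e \<ge> 0"
  unfolding weighted_sq_norm_def using assms by (intro sum_nonneg) auto

lemma weighted_quad_form_comparable_sq_norm:
  assumes P: "pos_def_mat P" and \<xi>: "\<And>i. \<xi>$i > 0"
  shows "\<exists>K>0. \<exists>C>0. \<forall>e. weighted_quad_form \<xi> P e \<le> K * weighted_sq_norm \<xi> e
                        \<and> weighted_sq_norm \<xi> e \<le> C * weighted_quad_form \<xi> P e"
proof -
  obtain K where "K > 0" "\<forall>e. weighted_quad_form \<xi> P e \<le> K * weighted_sq_norm \<xi> e"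
    using dominated_by_positive_homogeneous[of "weighted_quad_form \<xi> P" "weighted_sq_norm \<xi>"]
    by (auto simp: continuous_on_weighted_quad_form continuous_on_weighted_sq_norm
        weighted_quad_form_scaleR weighted_sq_norm_scaleR weighted_sq_norm_pos[OF \<xi>])
  moreover obtain C where "C > 0" "\<forall>e. weighted_sq_norm \<xi> e \<le> C * weighted_quad_form \<xi> P e"
    using dominated_by_positive_homogeneous[of "weighted_sq_norm \<xi>" "weighted_quad_form \<xi> P"]
    by (auto simp: continuous_on_weighted_quad_form continuous_on_weighted_sq_norm
        weighted_quad_form_scaleR weighted_sq_norm_scaleR weighted_quad_form_pos[OF P \<xi>])
  ultimately show ?thesis by blast
qed

lemma coupling_energy_sum_of_squares:
  fixes L :: "real^'m^'m" and B :: "real^'k^'n"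
  assumes "coupling_matrix L" and "\<xi> v* L = 0"
  shows "coupling_energy \<xi> L (B ** transpose B) e
       = (1/2) * (\<Sum>i\<in>UNIV. \<Sum>j\<in>UNIV. \<xi>$i * L$i$j * (norm (e$i v* B - e$j v* B))\<^sup>2)"
  unfolding coupling_energy_def inner_matrix_mult_transpose
  using coupling_matrix_weighted_sum_of_squares[OF assms, of "\<lambda>i. e$i v* B"] by simp

lemma coupling_energy_nonneg:
  fixes L :: "real^'m^'m" and B :: "real^'k^'n"
  assumes L: "coupling_matrix L" and "\<xi> v* L = 0" and \<xi>: "\<And>i. \<xi>$i > 0"
  shows "coupling_energy \<xi> L (B ** transpose B) e \<ge> 0"
  unfolding coupling_energy_sum_of_squares[OF assms(1,2)]
  by (intro mult_nonneg_nonneg sum_nonneg coupling_matrix_weighted_square_nonneg[OF L less_imp_le[OF \<xi>]])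
    simp

lemma coupling_energy_eq_0_imp_quad_form_eq_0:
  fixes L :: "real^'m^'m" and B :: "real^'k^'n" and D :: "real^'n^'n"
  assumes L: "coupling_matrix L" and irr: "irreducible_mat L"
    and \<xi>: "\<And>i. \<xi>$i > 0" "(\<Sum>i\<in>UNIV. \<xi>$i) = 1" "\<xi> v* L = 0"
    and ran: "Ran D \<subseteq> Ran (B ** transpose B)"
    and mean: "weighted_mean \<xi> e = 0" and energy: "coupling_energy \<xi> L (B ** transpose B) e = 0"
  shows "weighted_quad_form \<xi> D e = 0"
proof -
  have "(\<Sum>i\<in>UNIV. \<Sum>j\<in>UNIV. \<xi>$i * L$i$j * (norm (e$i v* B - e$j v* B))\<^sup>2) = 0"
    using energy by (simp add: coupling_energy_sum_of_squares[OF L \<xi>(3)])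
  then have const: "e$i v* B = e$k v* B" for i k
    by (rule irreducible_weighted_sum_of_squares_eq_0[OF L irr \<xi>(1)])
  have "weighted_mean \<xi> e v* B = (\<Sum>i\<in>UNIV. \<xi>$i *\<^sub>R (e$i v* B))"
    using linear_sum[OF matrix_vector_mul_linear[of "transpose B"], of "\<lambda>i. \<xi>$i *\<^sub>R e$i" UNIV]
    by (simp add: weighted_mean_def scaleR_vector_matrix_assoc)
  also have "\<dots> = (\<Sum>i\<in>UNIV. \<xi>$i) *\<^sub>R (e$k v* B)" for k
    unfolding scaleR_sum_left by (intro sum.cong refl) (metis const)
  finally have zero: "e$k v* B = 0" for k using mean \<xi>(2) by simp
  have "e$i \<bullet> (D *v e$i) = 0" for i
  proof -
    obtain w where "D *v e$i = (B ** transpose B) *v w" using ran by (auto simp: Ran_def)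
    then show ?thesis using zero[of i] by (simp add: inner_matrix_mult_transpose)
  qed
  then show ?thesis by (simp add: weighted_quad_form_def)
qed

lemma coupling_energy_dominates_quad_form:
  fixes L :: "real^'m^'m" and B :: "real^'k^'n" and D :: "real^'n^'n"
  assumes L: "coupling_matrix L" and irr: "irreducible_mat L"
    and \<xi>: "\<And>i. \<xi>$i > 0" "(\<Sum>i\<in>UNIV. \<xi>$i) = 1" "\<xi> v* L = 0"
    and ran: "Ran D \<subseteq> Ran (B ** transpose B)" and "\<epsilon> > 0"
  shows "\<exists>c0. \<forall>c\<ge>c0. \<forall>e. weighted_mean \<xi> e = 0 \<longrightarrow>
           weighted_quad_form \<xi> D e - \<epsilon> * weighted_sq_norm \<xi> e
             \<le> c * coupling_energy \<xi> L (B ** transpose B) e"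
proof -
  have "\<exists>c0\<ge>0. \<forall>c\<ge>c0. \<forall>e\<in>{e. weighted_mean \<xi> e = 0}.
          weighted_quad_form \<xi> D e - \<epsilon> * weighted_sq_norm \<xi> e
            \<le> c * coupling_energy \<xi> L (B ** transpose B) e"
  proof (rule dominated_by_multiple_on_subspace)
    show "subspace {e. weighted_mean \<xi> e = 0}"
      by (rule linear_subspace_kernel[OF linear_weighted_mean])
    show "weighted_quad_form \<xi> D e - \<epsilon> * weighted_sq_norm \<xi> e < 0"
      if "e \<in> {e. weighted_mean \<xi> e = 0}" "e \<noteq> 0"
        and "coupling_energy \<xi> L (B ** transpose B) e = 0" for e
      using that coupling_energy_eq_0_imp_quad_form_eq_0[OF L irr \<xi> ran]
        weighted_sq_norm_pos[OF \<xi>(1) that(2)] \<open>\<epsilon> > 0\<close>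
      by simp
  qed (auto intro!: continuous_intros continuous_on_weighted_quad_form continuous_on_weighted_sq_norm
      continuous_on_coupling_energy coupling_energy_nonneg[OF L \<xi>(3,1)]
      simp: weighted_quad_form_scaleR weighted_sq_norm_scaleR coupling_energy_scaleR algebra_simps)
  then show ?thesis by auto
qed

definition coupled_field ::
  "(real^'n \<Rightarrow> real^'n) \<Rightarrow> real^'n^'n \<Rightarrow> real^'m^'m \<Rightarrow> real \<Rightarrow> real^'n^'m \<Rightarrow> real^'n^'m" where
  "coupled_field f \<Gamma> L c z = (\<chi> i. f (z$i) + c *\<^sub>R (\<Sum>j\<in>UNIV. L$i$j *\<^sub>R (\<Gamma> *v z$j)))"

lemma coupling_term_deviation:
  fixes L :: "real^'m^'m" and \<Gamma> :: "real^'n^'n" and z :: "real^'n^'m"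
  assumes "coupling_matrix L"
  shows "(\<Sum>j\<in>UNIV. L$i$j *\<^sub>R (\<Gamma> *v z$j))
       = (\<Sum>j\<in>UNIV. L$i$j *\<^sub>R (\<Gamma> *v deviation \<xi> z $ j))"
proof -
  have "(\<Sum>j\<in>UNIV. L$i$j *\<^sub>R (\<Gamma> *v z$j))
      = (\<Sum>j\<in>UNIV. L$i$j *\<^sub>R (\<Gamma> *v deviation \<xi> z $ j))
        + (\<Sum>j\<in>UNIV. L$i$j) *\<^sub>R (\<Gamma> *v weighted_mean \<xi> z)"
    by (simp add: deviation_def matrix_vector_mult_diff_distrib scaleR_diff_right sum_subtractf
        scaleR_sum_left)
  then show ?thesis using assms by (simp add: coupling_matrix_def)
qed

lemma deviation_inner_coupled_field:
  fixes f :: "real^'n \<Rightarrow> real^'n" and \<Gamma> P :: "real^'n^'n" and B :: "real^'k^'n"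
    and L :: "real^'m^'m" and z :: "real^'n^'m"
  assumes PG: "P ** \<Gamma> = B ** transpose B" and L: "coupling_matrix L"
    and \<xi>: "(\<Sum>i\<in>UNIV. \<xi>$i) = 1"
  defines "e \<equiv> deviation \<xi> z"
  shows "(\<Sum>i\<in>UNIV. \<xi>$i * (e$i \<bullet> (P *v deviation \<xi> (coupled_field f \<Gamma> L c z) $ i)))
       = (\<Sum>i\<in>UNIV. \<xi>$i * (e$i \<bullet> (P *v (f (z$i) - f (weighted_mean \<xi> z)))))
         - c * coupling_energy \<xi> L (B ** transpose B) e"
proof -
  define v where "v = coupled_field f \<Gamma> L c z"
  define zb where "zb = weighted_mean \<xi> z"
  have "weighted_mean \<xi> e = 0"
    unfolding e_def by (rule weighted_mean_deviation[OF \<xi>])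
  note e_orth = weighted_mean_eq_0_inner[OF this]
  have v_split: "v$i = (f (z$i) - f zb) + f zb + c *\<^sub>R (\<Sum>j\<in>UNIV. L$i$j *\<^sub>R (\<Gamma> *v e$j))" for i
    by (simp add: v_def zb_def coupled_field_def e_def coupling_term_deviation[OF L])
  have coupling: "e$i \<bullet> (P *v (\<Sum>j\<in>UNIV. L$i$j *\<^sub>R (\<Gamma> *v e$j)))
      = (\<Sum>j\<in>UNIV. L$i$j * (e$i \<bullet> ((B ** transpose B) *v e$j)))" for i
    by (simp add: PG[symmetric] matrix_vector_mul_assoc linear_sum[OF matrix_vector_mul_linear]
        matrix_vector_mult_scaleR inner_sum_right)
  have "(\<Sum>i\<in>UNIV. \<xi>$i * (e$i \<bullet> (P *v deviation \<xi> v $ i)))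
      = (\<Sum>i\<in>UNIV. \<xi>$i * (e$i \<bullet> (P *v v$i)))"
    using e_orth[of "P *v weighted_mean \<xi> v"]
    by (simp add: deviation_def matrix_vector_mult_diff_distrib inner_diff_right right_diff_distrib
        sum_subtractf)
  also have "\<dots> = (\<Sum>i\<in>UNIV. \<xi>$i * (e$i \<bullet> (P *v (f (z$i) - f zb))))
      - c * coupling_energy \<xi> L (B ** transpose B) e"
    using e_orth[of "P *v f zb"]
    by (simp add: v_split coupling coupling_energy_def matrix_vector_right_distrib
        matrix_vector_mult_diff_distrib inner_diff_right right_diff_distrib sum_subtractf
        matrix_vector_mult_scaleR inner_add_right distrib_left sum.distrib sum_distrib_left mult_ac)
  finally show ?thesis by (simp add: v_def zb_def)
qed

lemma deviation_inner_coupled_field_le: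
  fixes f :: "real^'n \<Rightarrow> real^'n" and \<Gamma> P \<Delta> :: "real^'n^'n" and B :: "real^'k^'n"
    and L :: "real^'m^'m" and z :: "real^'n^'m"
  assumes quad: "QUAD f P \<Delta> \<epsilon>" and PG: "P ** \<Gamma> = B ** transpose B" and L: "coupling_matrix L"
    and \<xi>: "\<And>i. \<xi>$i \<ge> 0" "(\<Sum>i\<in>UNIV. \<xi>$i) = 1"
  defines "e \<equiv> deviation \<xi> z"
  shows "(\<Sum>i\<in>UNIV. \<xi>$i * (e$i \<bullet> (P *v deviation \<xi> (coupled_field f \<Gamma> L c z) $ i)))
       \<le> weighted_quad_form \<xi> (P ** \<Delta>) e - \<epsilon> * weighted_sq_norm \<xi> e
         - c * coupling_energy \<xi> L (B ** transpose B) e"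
proof -
  define zb where "zb = weighted_mean \<xi> z"
  have quad_i: "e$i \<bullet> (P *v (f (z$i) - f zb))
      \<le> e$i \<bullet> ((P ** \<Delta>) *v e$i) - \<epsilon> * (e$i \<bullet> e$i)" for i
  proof -
    have "e$i \<bullet> (P *v ((f (z$i) - f zb) - \<Delta> *v e$i)) \<le> - \<epsilon> * (e$i \<bullet> e$i)"
      using quad by (simp add: QUAD_def e_def deviation_def zb_def)
    then show ?thesis
      by (simp add: matrix_vector_mult_diff_distrib inner_diff_right matrix_vector_mul_assoc)
  qed
  have "(\<Sum>i\<in>UNIV. \<xi>$i * (e$i \<bullet> (P *v (f (z$i) - f zb))))
      \<le> (\<Sum>i\<in>UNIV. \<xi>$i * (e$i \<bullet> ((P ** \<Delta>) *v e$i) - \<epsilon> * (e$i \<bullet> e$i)))"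
    by (intro sum_mono mult_left_mono quad_i \<xi>(1))
  also have "\<dots> = weighted_quad_form \<xi> (P ** \<Delta>) e - \<epsilon> * weighted_sq_norm \<xi> e"
    by (simp add: weighted_quad_form_def weighted_sq_norm_def right_diff_distrib sum_subtractf
        sum_distrib_left mult_ac)
  finally show ?thesis
    unfolding e_def zb_def deviation_inner_coupled_field[OF PG L \<xi>(2)] by simp
qed

lemma coupled_solution_deviation_derivative:
  assumes "coupled_solution f \<Gamma> L c x" and "t \<ge> 0"
  shows "((\<lambda>s. deviation \<xi> (\<chi> k. x s k) $ i) has_vector_derivative
           deviation \<xi> (coupled_field f \<Gamma> L c (\<chi> k. x t k)) $ i) (at t within {0..})"
proof -
  have x: "((\<lambda>s. x s j) has_vector_derivative coupled_field f \<Gamma> L c (\<chi> k. x t k) $ j)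
      (at t within {0..})" for j
    using assms by (simp add: coupled_solution_def coupled_field_def)
  show ?thesis
    unfolding deviation_def weighted_mean_def
    by (simp, intro has_vector_derivative_diff x has_vector_derivative_sum
        bounded_linear.has_vector_derivative[OF bounded_linear_scaleR_right])
qed

lemma has_real_derivative_weighted_quad_form:
  fixes e :: "real \<Rightarrow> real^'n^'m" and P :: "real^'n^'n"
  assumes P: "transpose P = P"
    and e: "\<And>i. ((\<lambda>s. e s $ i) has_vector_derivative e' $ i) (at t within T)"
  shows "((\<lambda>s. weighted_quad_form \<xi> P (e s)) has_real_derivative
           2 * (\<Sum>i\<in>UNIV. \<xi>$i * (e t $ i \<bullet> (P *v e' $ i)))) (at t within T)"
proof -
  have sym: "u \<bullet> (P *v w) = w \<bullet> (P *v u)" for u w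
    by (metis P dot_lmul_matrix inner_commute vector_transpose_matrix)
  have "((\<lambda>s. e s $ i \<bullet> (P *v e s $ i)) has_vector_derivative
          e t $ i \<bullet> (P *v e' $ i) + e' $ i \<bullet> (P *v e t $ i)) (at t within T)" for i
    by (rule bounded_bilinear.has_vector_derivative[OF bounded_bilinear_inner e
          bounded_linear.has_vector_derivative[OF matrix_vector_mul_bounded_linear e]])
  then have "((\<lambda>s. weighted_quad_form \<xi> P (e s)) has_real_derivative
           (\<Sum>i\<in>UNIV. \<xi>$i * (e t $ i \<bullet> (P *v e' $ i) + e' $ i \<bullet> (P *v e t $ i)))) (at t within T)"
    unfolding has_real_derivative_iff_has_vector_derivative weighted_quad_form_def
    by (intro has_vector_derivative_sum bounded_linear.has_vector_derivative[OF bounded_linear_mult_right])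
  then show ?thesis
    by (simp add: sym[of "e' $ _"] sum_distrib_left algebra_simps)
qed

lemma exponential_decay:
  fixes V V' :: "real \<Rightarrow> real"
  assumes V: "\<And>t. t \<ge> 0 \<Longrightarrow> (V has_real_derivative V' t) (at t within {0..})"
    and V': "\<And>t. t \<ge> 0 \<Longrightarrow> V' t \<le> - \<delta> * V t"
    and "t \<ge> 0"
  shows "V t \<le> V 0 * exp (- \<delta> * t)"
proof -
  define W where "W s = V s * exp (\<delta> * s)" for s
  have W: "(W has_real_derivative (V' s + \<delta> * V s) * exp (\<delta> * s)) (at s within {0..})"
    if "s \<ge> 0" for s
    unfolding W_def by (rule derivative_eq_intros V[OF that] refl)+ (simp add: algebra_simps)
  have "W t \<le> W 0"
  proof (rule DERIV_nonpos_imp_decreasing_open[OF \<open>t \<ge> 0\<close>])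
    fix s :: real assume s: "0 < s" "s < t"
    have "at s within {0..} = at s"
      by (rule at_within_interior) (use s in simp)
    moreover have "(V' s + \<delta> * V s) * exp (\<delta> * s) \<le> 0"
      using V'[of s] s by (intro mult_nonpos_nonneg) auto
    ultimately show "\<exists>y. (W has_real_derivative y) (at s) \<and> y \<le> 0"
      using W[of s] s by auto
  next
    show "continuous_on {0..t} W"
      by (rule continuous_on_subset[OF DERIV_continuous_on[OF W]]) auto
  qed
  then show ?thesis
    by (simp add: W_def exp_minus field_simps)
qed

lemma tendsto_exp_neg_mult_at_top:
  assumes "\<delta> > (0::real)"
  shows "((\<lambda>t. a * exp (- \<delta> * t)) \<longlongrightarrow> 0) at_top"
proof -
  have "filterlim (\<lambda>t. - \<delta> * t) at_bot at_top"
    using assms by (intro filterlim_tendsto_neg_mult_at_bot[OF tendsto_const] filterlim_ident) auto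
  then have "((\<lambda>t. exp (- \<delta> * t)) \<longlongrightarrow> 0) at_top"
    by (rule filterlim_compose[OF exp_at_bot])
  then show ?thesis
    using tendsto_mult_right_zero by blast
qed

lemma synchronizes_if_deviation_tendsto_0:
  fixes x :: "real \<Rightarrow> 'm::finite \<Rightarrow> real^'n"
  assumes \<xi>: "\<And>i. \<xi>$i > 0"
    and lim: "((\<lambda>t. weighted_sq_norm \<xi> (deviation \<xi> (\<chi> k. x t k))) \<longlongrightarrow> 0) at_top"
  shows "synchronizes x"
proof -
  define e where "e t = deviation \<xi> (\<chi> k. x t k)" for t
  have "((\<lambda>t. norm (e t $ i)) \<longlongrightarrow> 0) at_top" for i
  proof -
    have "((\<lambda>t. \<xi>$i * (norm (e t $ i))\<^sup>2) \<longlongrightarrow> 0) at_top"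
    proof (rule tendsto_sandwich[OF _ _ tendsto_const lim[folded e_def]])
      show "\<forall>\<^sub>F t in at_top. 0 \<le> \<xi>$i * (norm (e t $ i))\<^sup>2"
        using less_imp_le[OF \<xi>] by simp
      show "\<forall>\<^sub>F t in at_top. \<xi>$i * (norm (e t $ i))\<^sup>2 \<le> weighted_sq_norm \<xi> (e t)"
        unfolding weighted_sq_norm_def power2_norm_eq_inner
        using less_imp_le[OF \<xi>] by (intro always_eventually allI member_le_sum) auto
    qed
    then have "((\<lambda>t. sqrt ((1 / \<xi>$i) * (\<xi>$i * (norm (e t $ i))\<^sup>2)))
        \<longlongrightarrow> sqrt ((1 / \<xi>$i) * 0)) at_top"
      by (intro tendsto_intros)
    then show ?thesis using \<xi>[of i] by simp
  qed
  then have "((\<lambda>t. norm (e t $ i - e t $ j)) \<longlongrightarrow> 0) at_top" for i j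
    by (intro tendsto_norm_zero tendsto_diff[where a=0 and b=0, simplified])
      (simp_all add: tendsto_norm_zero_iff)
  then show ?thesis
    by (simp add: synchronizes_def e_def deviation_def)
qed

lemma tendsto_0_if_derivative_le_neg_mult:
  fixes V :: "real \<Rightarrow> real"
  assumes "\<delta> > 0"
    and V: "\<And>t. t \<ge> 0 \<Longrightarrow>
      \<exists>V'. (V has_real_derivative V') (at t within {0..}) \<and> V' \<le> - \<delta> * V t"
    and V_nonneg: "\<And>t. t \<ge> 0 \<Longrightarrow> V t \<ge> 0"
  shows "(V \<longlongrightarrow> 0) at_top"
proof -
  obtain V' where "\<And>t. t \<ge> 0 \<Longrightarrow> (V has_real_derivative V' t) (at t within {0..})"
    and "\<And>t. t \<ge> 0 \<Longrightarrow> V' t \<le> - \<delta> * V t"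
    using V by metis
  note decay = exponential_decay[OF this]
  show ?thesis
  proof (rule tendsto_sandwich[OF _ _ tendsto_const tendsto_exp_neg_mult_at_top[OF \<open>\<delta> > 0\<close>]])
    show "\<forall>\<^sub>F t in at_top. 0 \<le> V t"
      using V_nonneg by (intro eventually_at_top_linorderI[of 0])
    show "\<forall>\<^sub>F t in at_top. V t \<le> V 0 * exp (- \<delta> * t)"
      using decay by (intro eventually_at_top_linorderI[of 0])
  qed
qed

lemma coupled_solution_lyapunov_derivative:
  fixes f :: "real^'n \<Rightarrow> real^'n" and \<Gamma> P \<Delta> :: "real^'n^'n" and B :: "real^'k^'n"
    and L :: "real^'m^'m"
  assumes quad: "QUAD f P \<Delta> \<epsilon>" and PG: "P ** \<Gamma> = B ** transpose B" and L: "coupling_matrix L"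
    and P: "transpose P = P" and \<xi>: "\<And>i. \<xi>$i \<ge> 0" "(\<Sum>i\<in>UNIV. \<xi>$i) = 1"
    and gain: "\<And>e. weighted_mean \<xi> e = 0 \<Longrightarrow>
      weighted_quad_form \<xi> (P ** \<Delta>) e - \<epsilon>/2 * weighted_sq_norm \<xi> e
        \<le> c * coupling_energy \<xi> L (B ** transpose B) e"
    and sol: "coupled_solution f \<Gamma> L c x" and "t \<ge> 0"
  defines "e \<equiv> \<lambda>t. deviation \<xi> (\<chi> k. x t k)"
  shows "\<exists>V'. ((\<lambda>s. weighted_quad_form \<xi> P (e s)) has_real_derivative V') (at t within {0..})
           \<and> V' \<le> - \<epsilon> * weighted_sq_norm \<xi> (e t)"
proof (intro exI conjI)
  define v where "v = deviation \<xi> (coupled_field f \<Gamma> L c (\<chi> k. x t k))"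
  show "((\<lambda>s. weighted_quad_form \<xi> P (e s)) has_real_derivative
          2 * (\<Sum>i\<in>UNIV. \<xi>$i * (e t $ i \<bullet> (P *v v $ i)))) (at t within {0..})"
    unfolding e_def v_def
    by (intro has_real_derivative_weighted_quad_form P
        coupled_solution_deviation_derivative[OF sol \<open>t \<ge> 0\<close>])
  have "2 * (\<Sum>i\<in>UNIV. \<xi>$i * (e t $ i \<bullet> (P *v v $ i)))
      \<le> 2 * (weighted_quad_form \<xi> (P ** \<Delta>) (e t) - \<epsilon> * weighted_sq_norm \<xi> (e t)
             - c * coupling_energy \<xi> L (B ** transpose B) (e t))"
    unfolding e_def v_def
    by (intro mult_left_mono deviation_inner_coupled_field_le[OF quad PG L \<xi>]) simp
  also have "\<dots> \<le> - \<epsilon> * weighted_sq_norm \<xi> (e t)"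
  proof -
    have "weighted_mean \<xi> (e t) = 0"
      unfolding e_def by (rule weighted_mean_deviation[OF \<xi>(2)])
    then show ?thesis using gain[of "e t"] by (simp add: algebra_simps)
  qed
  finally show "2 * (\<Sum>i\<in>UNIV. \<xi>$i * (e t $ i \<bullet> (P *v v $ i)))
      \<le> - \<epsilon> * weighted_sq_norm \<xi> (e t)" .
qed

lemma coupled_solution_synchronizes:
  fixes f :: "real^'n \<Rightarrow> real^'n" and \<Gamma> P \<Delta> :: "real^'n^'n" and B :: "real^'k^'n"
    and L :: "real^'m^'m"
  assumes quad: "QUAD f P \<Delta> \<epsilon>" and PG: "P ** \<Gamma> = B ** transpose B" and L: "coupling_matrix L"
    and P: "pos_def_mat P" and "\<epsilon> > 0"
    and \<xi>: "\<And>i. \<xi>$i > 0" "(\<Sum>i\<in>UNIV. \<xi>$i) = 1"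
    and gain: "\<And>e. weighted_mean \<xi> e = 0 \<Longrightarrow>
      weighted_quad_form \<xi> (P ** \<Delta>) e - \<epsilon>/2 * weighted_sq_norm \<xi> e
        \<le> c * coupling_energy \<xi> L (B ** transpose B) e"
    and sol: "coupled_solution f \<Gamma> L c x"
  shows "synchronizes x"
proof -
  define e where "e t = deviation \<xi> (\<chi> k. x t k)" for t
  define V where "V t = weighted_quad_form \<xi> P (e t)" for t
  obtain K C where "K > 0" "C > 0"
    and K: "\<And>e. weighted_quad_form \<xi> P e \<le> K * weighted_sq_norm \<xi> e"
    and C: "\<And>e. weighted_sq_norm \<xi> e \<le> C * weighted_quad_form \<xi> P e"
    using weighted_quad_form_comparable_sq_norm[OF P \<xi>(1)] by blast
  have sq_norm_nonneg: "weighted_sq_norm \<xi> (e t) \<ge> 0" for t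
    using weighted_sq_norm_nonneg less_imp_le[OF \<xi>(1)] by blast
  have "(V \<longlongrightarrow> 0) at_top"
  proof (rule tendsto_0_if_derivative_le_neg_mult[where \<delta> = "\<epsilon> / K"])
    show "\<epsilon> / K > 0" using \<open>\<epsilon> > 0\<close> \<open>K > 0\<close> by simp
    show "V t \<ge> 0" if "t \<ge> 0" for t
      using order_trans[OF sq_norm_nonneg C[of "e t"]] \<open>C > 0\<close>
      by (simp add: V_def zero_le_mult_iff)
  next
    fix t :: real assume "t \<ge> 0"
    obtain V' where "(V has_real_derivative V') (at t within {0..})"
      and "V' \<le> - \<epsilon> * weighted_sq_norm \<xi> (e t)"
      using coupled_solution_lyapunov_derivative[OF quad PG L _ less_imp_le[OF \<xi>(1)] \<xi>(2) gain sol
          \<open>t \<ge> 0\<close>] P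
      unfolding V_def e_def pos_def_mat_def by blast
    moreover have "- \<epsilon> * weighted_sq_norm \<xi> (e t) \<le> - (\<epsilon> / K) * V t"
      using K[of "e t"] \<open>K > 0\<close> \<open>\<epsilon> > 0\<close> by (simp add: V_def field_simps)
    ultimately show "\<exists>V'. (V has_real_derivative V') (at t within {0..})
        \<and> V' \<le> - (\<epsilon> / K) * V t"
      by auto
  qed
  have "((\<lambda>t. weighted_sq_norm \<xi> (e t)) \<longlongrightarrow> 0) at_top"
  proof (rule tendsto_sandwich[OF _ _ tendsto_const])
    show "((\<lambda>t. C * V t) \<longlongrightarrow> 0) at_top"
      using tendsto_mult_right_zero[OF \<open>(V \<longlongrightarrow> 0) at_top\<close>] .
  qed (use C sq_norm_nonneg in \<open>auto simp: V_def\<close>)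
  then show ?thesis
    unfolding e_def by (rule synchronizes_if_deviation_tendsto_0[OF \<xi>(1)])
qed

theorem proposition1:
  fixes f :: "real^'n \<Rightarrow> real^'n"
    and \<Gamma> P \<Delta> B :: "real^'n^'n"
    and L :: "real^'m^'m"
    and \<epsilon> :: real
  assumes "continuous_on UNIV f"
    and "coupling_matrix L"
    and "irreducible_mat L"
    and "rank L = CARD('m) - 1"
    and "pos_def_mat P"
    and "\<epsilon> > 0"
    and "QUAD f P \<Delta> \<epsilon>"
    and "Ran (P ** \<Delta>) = Ran (P ** \<Gamma>)"
    and "P ** \<Gamma> = B ** transpose B"
    and "pos_def_on (P ** \<Gamma>) (Ran (P ** \<Gamma>))"
  shows "\<exists>c0. \<forall>c>c0. \<forall>x. coupled_solution f \<Gamma> L c x \<longrightarrow> synchronizes x"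
proof -
  obtain \<xi> where \<xi>: "\<And>i. \<xi>$i > 0" "(\<Sum>i\<in>UNIV. \<xi>$i) = 1" "\<xi> v* L = 0"
    using coupling_matrix_perron_vector[OF assms(2,3)] by blast
  have ran: "Ran (P ** \<Delta>) \<subseteq> Ran (B ** transpose B)"
    using assms(8,9) by simp
  obtain c0 where "\<forall>c\<ge>c0. \<forall>e. weighted_mean \<xi> e = 0 \<longrightarrow>
      weighted_quad_form \<xi> (P ** \<Delta>) e - \<epsilon>/2 * weighted_sq_norm \<xi> e
        \<le> c * coupling_energy \<xi> L (B ** transpose B) e"
    using coupling_energy_dominates_quad_form[OF assms(2,3) \<xi> ran half_gt_zero[OF assms(6)]] by blast
  then show ?thesis
    using coupled_solution_synchronizes[OF assms(7,9,2,5,6) \<xi>(1,2)] by (meson less_imp_le)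
qed

end
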